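(* Let $R\subseteq\mathbb{C}$ be a subset such that $M:=\inf\{|x|: x\in R\setminus\{0\}\}>0$. Let $\mathcal{F}=(c_{i,j})$ be a frieze pattern over $R\setminus\{0\}$ of height $n\in\mathbb{N}$. Then every entry $c_{i,i+2}$ ($i\in\mathbb{Z}$) of its quiddity cycle satisfies $$|c_{i,i+2}|\le\frac{(n-1)+2M}{M^2}.$$
   Context: A frieze pattern of height $n$ over $S\subseteq\mathbb{C}$ is a family $(c_{i,j})_{i\in\mathbb{Z},\ i\le j\le i+n+3}$ of complex numbers such that: - $c_{i,i}=c_{i,i+n+3}=0$ and $c_{i,i+1}=c_{i,i+n+2}=1$; - $c_{i,j}\in S$ for $i+2\le j\le i+n+1$; - every adjacent $2\times2$ determinant $c_{i,j}c_{i+1,j+1}-c_{i,j+1}c_{i+1,j}$ (all entries defined) equals $1$. "Over $R\setminus\{0\}$" means all entries $c_{i,j}$ with $i+2\le j\le i+n+1$ are nonzero elements of $R$. The quiddity cycle of the pattern consists of the entries $c_{i,i+2}$ of its first nontrivial diagonal. *)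

theory Defs
  imports Complex_Main
begin

text \<open>A frieze pattern of height n over S. The family (c i j) is modelled as a
total function int => int => complex; only the values with i <= j <= i+n+3 matter.\<close>
definition frieze_pattern :: "nat \<Rightarrow> complex set \<Rightarrow> (int \<Rightarrow> int \<Rightarrow> complex) \<Rightarrow> bool" where
  "frieze_pattern n S c \<longleftrightarrow>
     (\<forall>i::int. c i i = 0 \<and> c i (i + int n + 3) = 0 \<and>
               c i (i + 1) = 1 \<and> c i (i + int n + 2) = 1) \<and>
     (\<forall>i j::int. i + 2 \<le> j \<and> j \<le> i + int n + 1 \<longrightarrow> c i j \<in> S) \<and>
     (\<forall>i j::int. i + 1 \<le> j \<and> j \<le> i + int n + 2 \<longrightarrow>
        c i j * c (i + 1) (j + 1) - c i (j + 1) * c (i + 1) j = 1)"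

end

theory Submission
  imports Defs
begin

text \<open>Fix a row index i and write d m for the entry c (i+1) (i+2+m). The unimodular rule
  between the rows i and i+1 makes the quotients c i (i+2+m) / d m telescope, and since
  row i ends with the zero c i (i+n+3), this expresses the quiddity entry as
  c i (i+2) = (sum over l <= n of 1 / (d l * d (l+1))) with d 0 = d (n+1) = 1.
  The two boundary terms have one factor of modulus at least M, the n - 1 inner terms
  have two, which gives the bound.\<close>

lemma telescoping_quotients:
  fixes a d :: "nat \<Rightarrow> 'a::field"
  assumes "\<And>m. m < N \<Longrightarrow> a m * d (Suc m) - a (Suc m) * d m = 1"
    and "\<And>m. m \<le> N \<Longrightarrow> d m \<noteq> 0"
  shows "a N / d N = a 0 / d 0 - (\<Sum>l<N. 1 / (d l * d (Suc l)))"
  using assms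
proof (induction N)
  case 0
  then show ?case by simp
next
  case (Suc N)
  have "d N \<noteq> 0" "d (Suc N) \<noteq> 0"
    using Suc.prems(2) by auto
  with Suc.prems(1)[of N]
  have "a (Suc N) / d (Suc N) = a N / d N - 1 / (d N * d (Suc N))"
    by (simp add: field_simps)
  with Suc show ?case by simp
qed

lemma frieze_quiddity_eq_sum:
  assumes frieze: "frieze_pattern n S c" and "0 \<notin> S"
  shows "c i (i + 2) = (\<Sum>l\<le>n. 1 / (c (i + 1) (i + 2 + int l) * c (i + 1) (i + 3 + int l)))"
proof -
  define a where "a m = c i (i + 2 + int m)" for m
  define d where "d m = c (i + 1) (i + 2 + int m)" for m
  note F = frieze[unfolded frieze_pattern_def]
  have d_boundary: "d 0 = 1" "d (n + 1) = 1"
    using F unfolding d_def by (auto simp: algebra_simps dest!: spec[of _ "i + 1"])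
  have "d m \<noteq> 0" if "m \<le> n + 1" for m
  proof (cases "m = 0 \<or> m = n + 1")
    case True
    with d_boundary show ?thesis by auto
  next
    case False
    with that have "i + 1 + 2 \<le> i + 2 + int m \<and> i + 2 + int m \<le> i + 1 + int n + 1"
      by auto
    then have "d m \<in> S"
      using F unfolding d_def by blast
    with \<open>0 \<notin> S\<close> show ?thesis
      by auto
  qed
  moreover have "a m * d (Suc m) - a (Suc m) * d m = 1" if "m < n + 1" for m
  proof -
    define j where "j = i + 2 + int m"
    have "i + 1 \<le> j \<and> j \<le> i + int n + 2"
      using \<open>m < n + 1\<close> unfolding j_def by simp
    then have "c i j * c (i + 1) (j + 1) - c i (j + 1) * c (i + 1) j = 1"
      using F by blast
    then show ?thesis
      unfolding a_def d_def j_def by (simp add: algebra_simps)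
  qed
  ultimately have "a (n + 1) / d (n + 1) = a 0 / d 0 - (\<Sum>l<n + 1. 1 / (d l * d (Suc l)))"
    by (intro telescoping_quotients) auto
  moreover have "a (n + 1) = 0"
    using F unfolding a_def by (auto simp: algebra_simps)
  ultimately have "a 0 = (\<Sum>l<n + 1. 1 / (d l * d (Suc l)))"
    using d_boundary by simp
  then show ?thesis
    unfolding a_def d_def by (simp add: lessThan_Suc_atMost algebra_simps)
qed

lemma norm_sum_inverse_products_le:
  fixes d :: "nat \<Rightarrow> 'a::real_normed_field"
  assumes "n \<ge> 1" and "M > 0" and "d 0 = 1" and "d (n + 1) = 1"
    and lower: "\<And>m. 1 \<le> m \<Longrightarrow> m \<le> n \<Longrightarrow> M \<le> norm (d m)"
  shows "norm (\<Sum>l\<le>n. 1 / (d l * d (Suc l))) \<le> ((real n - 1) + 2 * M) / M ^ 2"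
proof -
  have "{..n} = insert 0 (insert n {1..<n})"
    using \<open>n \<ge> 1\<close> by auto
  then have "(\<Sum>l\<le>n. 1 / (d l * d (Suc l)))
      = 1 / d 1 + (1 / d n + (\<Sum>l\<in>{1..<n}. 1 / (d l * d (Suc l))))"
    using assms(1,3,4) by simp
  also have "norm \<dots> \<le> 1 / M + (1 / M + real (n - 1) * (1 / M ^ 2))"
  proof -
    have boundary: "norm (1 / d 1) \<le> 1 / M" "norm (1 / d n) \<le> 1 / M"
      using lower[of 1] lower[of n] assms(1,2) by (simp_all add: norm_divide frac_le)
    have "norm (1 / (d l * d (Suc l))) \<le> 1 / M ^ 2" if "l \<in> {1..<n}" for l
    proof -
      have "M * M \<le> norm (d l) * norm (d (Suc l))"
        using lower that \<open>M > 0\<close> by (intro mult_mono) auto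
      then show ?thesis
        using \<open>M > 0\<close> by (simp add: norm_divide norm_mult power2_eq_square frac_le)
    qed
    then have "norm (\<Sum>l\<in>{1..<n}. 1 / (d l * d (Suc l))) \<le> real (n - 1) * (1 / M ^ 2)"
      using sum_norm_le[of "{1..<n}" "\<lambda>l. 1 / (d l * d (Suc l))" "\<lambda>_. 1 / M ^ 2"] by simp
    with boundary show ?thesis
      by (smt (verit) norm_triangle_ineq)
  qed
  also have "\<dots> = ((real n - 1) + 2 * M) / M ^ 2"
    using assms(1,2) by (simp add: of_nat_diff field_simps power2_eq_square)
  finally show ?thesis .
qed

theorem theorem3p6:
  fixes R :: "complex set" and n :: nat and c :: "int \<Rightarrow> int \<Rightarrow> complex" and M :: real
  assumes "M = Inf (norm ` (R - {0}))"
    and "M > 0"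
    and "n \<ge> 1"
    and "frieze_pattern n (R - {0}) c"
  shows "\<forall>i::int. norm (c i (i + 2)) \<le> ((real n - 1) + 2 * M) / M ^ 2"
proof
  fix i :: int
  note F = assms(4)[unfolded frieze_pattern_def]
  have "M \<le> norm (c (i + 1) (i + 2 + int m))" if "1 \<le> m" "m \<le> n" for m
  proof -
    have "c (i + 1) (i + 2 + int m) \<in> R - {0}"
      using F that by auto
    then show ?thesis
      unfolding assms(1) by (intro cInf_lower imageI) (auto intro: bdd_belowI[where m = 0])
  qed
  moreover have "c (i + 1) (i + 2 + int 0) = 1" "c (i + 1) (i + 2 + int (n + 1)) = 1"
    using F by (auto simp: algebra_simps dest!: spec[of _ "i + 1"])
  ultimately have "norm (\<Sum>l\<le>n. 1 / (c (i + 1) (i + 2 + int l) * c (i + 1) (i + 2 + int (Suc l))))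
      \<le> ((real n - 1) + 2 * M) / M ^ 2"
    using assms(2,3) by (intro norm_sum_inverse_products_le) auto
  then show "norm (c i (i + 2)) \<le> ((real n - 1) + 2 * M) / M ^ 2"
    using frieze_quiddity_eq_sum[OF assms(4)] by (simp add: algebra_simps)
qed

end
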